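(* Under the hypotheses of Proposition 3.1 (i.e. $X$ a max-stable random field on $\mathbb R^2$ with unit Fréchet margins, $\mathbf i\in\mathbb R^2$, $\mathbf A\subset\mathbb R^2$ finite nonempty), $$\frac{\sum_{\mathbf j\in\mathbf A}\epsilon_{\{\mathbf i,\mathbf j\}}-|\mathbf A|}{|\mathbf A|+1}\ \le\ SI(\mathbf A,\mathbf i)\ \le\ \frac{\sum_{\mathbf j\in\mathbf A}\epsilon_{\{\mathbf i,\mathbf j\}}-|\mathbf A|}{\max_{\mathbf j\in\mathbf A}\epsilon_{\{\mathbf i,\mathbf j\}}}.$$
   Context: A random field $X=\{X_{\mathbf i}\}_{\mathbf i\in\mathbb R^2}$ is max-stable with unit Fréchet margins if every $X_{\mathbf i}$ has distribution function $F(x)=\exp(-1/x)$, $x>0$, and for every finite set $\mathbf B=\{\mathbf i_1,\dots,\mathbf i_k\}\subset\mathbb R^2$ the joint distribution is a multivariate extreme value distribution $P(X_{\mathbf i_1}\le x_1,\dots,X_{\mathbf i_k}\le x_k)=\exp(-V_{\mathbf B}(x_1,\dots,x_k))$, $x_j>0$, where the exponent function $V_{\mathbf B}$ is homogeneous of order $-1$. The extremal coefficient of $\mathbf B$ is $\epsilon_{\mathbf B}=V_{\mathbf B}(1,\dots,1)$, so that $P(X_{\mathbf k}\le x\ \forall \mathbf k\in\mathbf B)=\exp(-\epsilon_{\mathbf B}/x)$ for $x>0$. For $u\in(0,1)$ let $N_u(\mathbf A,\mathbf i)=\sum_{\mathbf j\in\mathbf A}\mathbf 1_{\{F(X_{\mathbf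 i})\le u<F(X_{\mathbf j})\}}$. The stability index of $\mathbf A$ associated with $\mathbf i$ is $$SI(\mathbf A,\mathbf i)=\lim_{u\uparrow1}\frac{E\big(N_u(\mathbf A,\mathbf i)\big)}{1-P\big(F(X_{\mathbf i})\le u,\ F(X_{\mathbf j})\le u\ \forall\mathbf j\in\mathbf A\big)}.$$ *)

theory Defs
  imports "HOL-Probability.Probability"
begin

type_synonym site = "real^2"

definition frechet_cdf :: "real \<Rightarrow> real" where
  "frechet_cdf x = (if x > 0 then exp (- 1 / x) else 0)"

definition max_stable_frechet :: "'a measure \<Rightarrow> (site \<Rightarrow> 'a \<Rightarrow> real) \<Rightarrow> bool" where
  "max_stable_frechet M X \<longleftrightarrow>
     prob_space M \<and>
     (\<forall>k. X k \<in> borel_measurable M) \<and>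
     (\<forall>k x. measure M {\<omega> \<in> space M. X k \<omega> \<le> x} = frechet_cdf x) \<and>
     (\<forall>B. finite B \<and> B \<noteq> {} \<longrightarrow>
        (\<exists>V :: (site \<Rightarrow> real) \<Rightarrow> real.
           (\<forall>x. (\<forall>k\<in>B. x k > 0) \<longrightarrow>
                measure M {\<omega> \<in> space M. \<forall>k\<in>B. X k \<omega> \<le> x k} = exp (- V x)) \<and>
           (\<forall>x c. (\<forall>k\<in>B. x k > 0) \<longrightarrow> c > 0 \<longrightarrow> V (\<lambda>k. c * x k) = V x / c)))"

text \<open>Extremal coefficient: eps_B = V_B(1,...,1), i.e. P(X_k <= 1 for all k in B) = exp(-eps_B).\<close>
definition extremal_coeff :: "'a measure \<Rightarrow> (site \<Rightarrow> 'a \<Rightarrow> real) \<Rightarrow> site set \<Rightarrow> real" where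
  "extremal_coeff M X B = - ln (measure M {\<omega> \<in> space M. \<forall>k\<in>B. X k \<omega> \<le> 1})"

definition expected_N :: "'a measure \<Rightarrow> (site \<Rightarrow> 'a \<Rightarrow> real) \<Rightarrow> site set \<Rightarrow> site \<Rightarrow> real \<Rightarrow> real" where
  "expected_N M X A i u =
     integral\<^sup>L M (\<lambda>\<omega>. \<Sum>j\<in>A. indicator
        {\<omega> \<in> space M. frechet_cdf (X i \<omega>) \<le> u \<and> u < frechet_cdf (X j \<omega>)} \<omega>)"

definition stability_index :: "'a measure \<Rightarrow> (site \<Rightarrow> 'a \<Rightarrow> real) \<Rightarrow> site set \<Rightarrow> site \<Rightarrow> real" where
  "stability_index M X A i =
     Lim (at_left 1) (\<lambda>u. expected_N M X A i u /
        (1 - measure M {\<omega> \<in> space M. frechet_cdf (X i \<omega>) \<le> u \<and>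
                                      (\<forall>j\<in>A. frechet_cdf (X j \<omega>) \<le> u)}))"

end

theory Submission
  imports Defs
begin

(* Passing to the uniform scale U_k = F(X_k), max-stability and homogeneity of the
   exponent function give, for every finite nonempty set B of sites and 0 < u < 1,
       P(U_k <= u for all k in B) = u powr eps_B.
   Hence P(U_i <= u < U_j) = u - u powr eps_{i,j}, and the quotient defining SI(A,i) equals
       (SUM j:A. (u - u powr eps_{i,j})) / (1 - u powr eps_{A+i}).
   Dividing numerator and denominator by 1 - u and using (1 - u powr a)/(1 - u) --> a as u --> 1-
   yields the exact value SI(A,i) = (SUM j:A. eps_{i,j} - |A|) / eps_{A+i}.
   The theorem then follows from the bounds  max_j eps_{i,j} <= eps_{A+i} <= |A| + 1, namely
   monotonicity of extremal coefficients under inclusion and eps_B <= |B| (a union bound). *)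

lemma max_stable_prob_space:
  "max_stable_frechet M X \<Longrightarrow> prob_space M"
  unfolding max_stable_frechet_def by blast

lemma max_stable_measurable:
  "max_stable_frechet M X \<Longrightarrow> X k \<in> borel_measurable M"
  unfolding max_stable_frechet_def by blast

lemma frechet_cdf_measurable[measurable]: "frechet_cdf \<in> borel_measurable borel"
  unfolding frechet_cdf_def by measurable

lemma frechet_le_iff:
  assumes "0 < u" "u < 1"
  shows "frechet_cdf y \<le> u \<longleftrightarrow> y \<le> -1 / ln u"
proof -
  have ln_neg: "ln u < 0" using assms by simp
  show ?thesis
  proof (cases "y > 0")
    case True
    have "frechet_cdf y \<le> u \<longleftrightarrow> exp (-1/y) \<le> exp (ln u)"
      using True assms by (simp add: frechet_cdf_def)
    also have "\<dots> \<longleftrightarrow> y \<le> -1/ln u" using True ln_neg by (simp add: field_simps)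
    finally show ?thesis .
  next
    case False
    have "-1/ln u > 0" using ln_neg by (simp add: divide_neg_neg)
    then have "y \<le> -1/ln u" using False by linarith
    then show ?thesis using False assms by (simp add: frechet_cdf_def)
  qed
qed

text \<open>Homogeneity of the exponent function on the diagonal:
  P(X_k <= x for all k in B) = exp(-eps_B / x).\<close>
lemma joint_cdf_diagonal:
  assumes ms: "max_stable_frechet M X" and B: "finite B" "B \<noteq> {}" and x: "x > 0"
  shows "measure M {\<omega>\<in>space M. \<forall>k\<in>B. X k \<omega> \<le> x} = exp (- extremal_coeff M X B / x)"
proof -
  obtain V where
    V_law: "\<And>x. (\<forall>k\<in>B. x k > 0) \<Longrightarrow>
              measure M {\<omega> \<in> space M. \<forall>k\<in>B. X k \<omega> \<le> x k} = exp (- V x)" and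
    V_hom: "\<And>x c. (\<forall>k\<in>B. x k > 0) \<Longrightarrow> c > 0 \<Longrightarrow> V (\<lambda>k. c * x k) = V x / c"
    using ms B unfolding max_stable_frechet_def by blast
  have eps: "extremal_coeff M X B = V (\<lambda>k. 1)"
    using V_law[of "\<lambda>k. 1"] unfolding extremal_coeff_def by simp
  have "measure M {\<omega>\<in>space M. \<forall>k\<in>B. X k \<omega> \<le> x} = exp (- V (\<lambda>k. x))"
    using V_law[of "\<lambda>k. x"] x by simp
  also have "V (\<lambda>k. x) = V (\<lambda>k. 1) / x" using V_hom[of "\<lambda>k. 1" x] x by simp
  finally show ?thesis using eps by simp
qed

lemma joint_cdf_uniform_scale:
  assumes ms: "max_stable_frechet M X" and B: "finite B" "B \<noteq> {}" and u: "0 < u" "u < 1"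
  shows "measure M {\<omega>\<in>space M. \<forall>k\<in>B. frechet_cdf (X k \<omega>) \<le> u} = u powr extremal_coeff M X B"
proof -
  have "{\<omega>\<in>space M. \<forall>k\<in>B. frechet_cdf (X k \<omega>) \<le> u} = {\<omega>\<in>space M. \<forall>k\<in>B. X k \<omega> \<le> -1/ln u}"
    using frechet_le_iff[OF u] by simp
  moreover have "-1/ln u > 0" using u by (simp add: divide_neg_neg)
  ultimately have "measure M {\<omega>\<in>space M. \<forall>k\<in>B. frechet_cdf (X k \<omega>) \<le> u}
                     = exp (- extremal_coeff M X B / (-1/ln u))"
    using joint_cdf_diagonal[OF ms B] by simp
  also have "\<dots> = u powr extremal_coeff M X B" using u by (simp add: powr_def)
  finally show ?thesis .
qed

lemma extremal_coeff_singleton: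
  "max_stable_frechet M X \<Longrightarrow> extremal_coeff M X {i} = 1"
  unfolding extremal_coeff_def max_stable_frechet_def by (simp add: frechet_cdf_def)

lemma uniform_margin:
  assumes ms: "max_stable_frechet M X" and u: "0 < u" "u < 1"
  shows "measure M {\<omega>\<in>space M. frechet_cdf (X k \<omega>) \<le> u} = u"
  using joint_cdf_uniform_scale[OF ms, of "{k}" u] u extremal_coeff_singleton[OF ms] by simp

text \<open>Extremal coefficients grow with the set of sites (a larger joint event is smaller).\<close>
lemma extremal_coeff_mono:
  assumes ms: "max_stable_frechet M X" and C: "finite C" and BC: "B \<subseteq> C" "B \<noteq> {}"
  shows "extremal_coeff M X B \<le> extremal_coeff M X C"
proof -
  interpret prob_space M using max_stable_prob_space[OF ms] .
  note [measurable] = max_stable_measurable[OF ms]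
  have B: "finite B" "B \<noteq> {}" using C BC finite_subset by blast+
  have C_ne: "C \<noteq> {}" using BC by blast
  have "measure M {\<omega>\<in>space M. \<forall>k\<in>C. X k \<omega> \<le> 1} \<le> measure M {\<omega>\<in>space M. \<forall>k\<in>B. X k \<omega> \<le> 1}"
    by (rule finite_measure_mono) (use BC B in \<open>blast, measurable\<close>)
  hence "exp (- extremal_coeff M X C) \<le> exp (- extremal_coeff M X B)"
    using joint_cdf_diagonal[OF ms B, of 1] joint_cdf_diagonal[OF ms C C_ne, of 1] BC by auto
  thus ?thesis by simp
qed

text \<open>The derivative of u powr a at u = 1, written as a one-sided difference quotient;
  this is the limit that turns probabilities into extremal coefficients.\<close>
lemma powr_difference_quotient_limit:
  "((\<lambda>u. (1 - u powr a) / (1 - u)) \<longlongrightarrow> a) (at_left (1::real))"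
proof -
  have "((\<lambda>u. u powr a) has_real_derivative a * 1 powr (a - 1)) (at 1)"
    by (rule has_real_derivative_powr) simp
  hence "((\<lambda>y. (y powr a - 1 powr a) / (y - 1)) \<longlongrightarrow> a) (at 1)"
    by (simp add: has_field_derivative_iff)
  hence "((\<lambda>y. (y powr a - 1 powr a) / (y - 1)) \<longlongrightarrow> a) (at_left 1)"
    by (rule tendsto_mono[OF at_le, rotated]) simp
  moreover have "(y powr a - 1 powr a) / (y - 1) = (1 - y powr a) / (1 - y)" for y :: real
    by (metis minus_diff_eq minus_divide_divide powr_one_eq_one)
  ultimately show ?thesis by simp
qed

lemma eventually_unit_interval_at_left_1: "eventually (\<lambda>u. u \<in> {0<..<1::real}) (at_left 1)"
  by (rule eventually_at_left_real) simp

text \<open>Union bound: 1 - u powr eps_B = P(some U_k > u) <= |B| (1 - u); letting u --> 1-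
  gives eps_B <= |B|.\<close>
lemma extremal_coeff_le_card:
  assumes ms: "max_stable_frechet M X" and B: "finite B" "B \<noteq> {}"
  shows "extremal_coeff M X B \<le> card B"
proof -
  interpret prob_space M using max_stable_prob_space[OF ms] .
  note [measurable] = max_stable_measurable[OF ms]
  let ?e = "extremal_coeff M X B"
  let ?exceed = "\<lambda>u k. space M - {\<omega>\<in>space M. frechet_cdf (X k \<omega>) \<le> u}"
  have "eventually (\<lambda>u. (1 - u powr ?e) / (1 - u) \<le> card B) (at_left (1::real))"
    using eventually_unit_interval_at_left_1
  proof (rule eventually_mono)
    fix u :: real assume "u \<in> {0<..<1}"
    then have u: "0 < u" "u < 1" by auto
    have all_below: "{\<omega>\<in>space M. \<forall>k\<in>B. frechet_cdf (X k \<omega>) \<le> u} \<in> sets M"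
      using B(1) by measurable
    have "1 - u powr ?e = prob (space M - {\<omega>\<in>space M. \<forall>k\<in>B. frechet_cdf (X k \<omega>) \<le> u})"
      using joint_cdf_uniform_scale[OF ms B, of u] u prob_compl[OF all_below] by simp
    also have "\<dots> \<le> prob (\<Union>k\<in>B. ?exceed u k)"
    proof (rule finite_measure_mono)
      have "\<And>k. ?exceed u k \<in> sets M" by measurable
      then show "(\<Union>k\<in>B. ?exceed u k) \<in> sets M" using B(1) by (intro sets.finite_UN) auto
    qed auto
    also have "\<dots> \<le> (\<Sum>k\<in>B. prob (?exceed u k))"
      by (rule finite_measure_subadditive_finite) (use B(1) in auto)
    also have "\<dots> = card B * (1 - u)"
      by (simp add: prob_compl uniform_margin[OF ms u])
    finally show "(1 - u powr ?e) / (1 - u) \<le> card B" using u by (simp add: divide_le_eq)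
  qed
  then show ?thesis
    by (rule tendsto_upperbound[OF powr_difference_quotient_limit]) simp
qed

lemma expected_N_closed_form:
  assumes ms: "max_stable_frechet M X" and A: "finite A" and u: "0 < u" "u < 1"
  shows "expected_N M X A i u = (\<Sum>j\<in>A. u - u powr extremal_coeff M X {i, j})"
proof -
  interpret prob_space M using max_stable_prob_space[OF ms] .
  note [measurable] = max_stable_measurable[OF ms]
  have below_above: "prob {\<omega> \<in> space M. frechet_cdf (X i \<omega>) \<le> u \<and> u < frechet_cdf (X j \<omega>)}
                       = u - u powr extremal_coeff M X {i, j}" for j
  proof -
    have both_below: "prob {\<omega>\<in>space M. frechet_cdf (X i \<omega>) \<le> u \<and> frechet_cdf (X j \<omega>) \<le> u}
                        = u powr extremal_coeff M X {i, j}"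
      using joint_cdf_uniform_scale[OF ms, of "{i, j}" u] u by simp
    have "{\<omega> \<in> space M. frechet_cdf (X i \<omega>) \<le> u \<and> u < frechet_cdf (X j \<omega>)}
          = {\<omega>\<in>space M. frechet_cdf (X i \<omega>) \<le> u}
            - {\<omega>\<in>space M. frechet_cdf (X i \<omega>) \<le> u \<and> frechet_cdf (X j \<omega>) \<le> u}"
      by auto
    also have "prob \<dots> = u - u powr extremal_coeff M X {i, j}"
      by (subst finite_measure_Diff) (auto simp: uniform_margin[OF ms u] both_below)
    finally show ?thesis .
  qed
  show ?thesis
    unfolding expected_N_def
    by (subst Bochner_Integration.integral_sum)
       (auto simp: integrable_indicator_iff below_above Int_absorb2 less_top[symmetric])
qed

lemma stability_index_closed_form:
  assumes ms: "max_stable_frechet M X" and A: "finite A"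
  shows "stability_index M X A i
           = ((\<Sum>j\<in>A. extremal_coeff M X {i, j}) - real (card A)) / extremal_coeff M X (insert i A)"
proof -
  define e where "e j = extremal_coeff M X {i, j}" for j
  define eB where "eB = extremal_coeff M X (insert i A)"
  have eB_ge_1: "eB \<ge> 1"
    using extremal_coeff_mono[OF ms, of "insert i A" "{i}"] A extremal_coeff_singleton[OF ms]
    unfolding eB_def by simp
  define q where "q u = (\<Sum>j\<in>A. (1 - u powr e j) / (1 - u) - 1) / ((1 - u powr eB) / (1 - u))"
    for u :: real
  have q_limit: "(q \<longlongrightarrow> (\<Sum>j\<in>A. e j - 1) / eB) (at_left 1)"
    unfolding q_def using eB_ge_1
    by (intro tendsto_divide tendsto_sum tendsto_diff powr_difference_quotient_limit tendsto_const)
       auto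
  have "eventually (\<lambda>u. q u = expected_N M X A i u /
          (1 - measure M {\<omega> \<in> space M. frechet_cdf (X i \<omega>) \<le> u \<and>
                                        (\<forall>j\<in>A. frechet_cdf (X j \<omega>) \<le> u)})) (at_left (1::real))"
    using eventually_unit_interval_at_left_1
  proof (rule eventually_mono)
    fix u :: real assume "u \<in> {0<..<1}"
    then have u: "0 < u" "u < 1" by auto
    have joint: "measure M {\<omega> \<in> space M. frechet_cdf (X i \<omega>) \<le> u \<and>
                                        (\<forall>j\<in>A. frechet_cdf (X j \<omega>) \<le> u)} = u powr eB"
      using joint_cdf_uniform_scale[OF ms, of "insert i A" u] A u unfolding eB_def by simp
    have "u powr eB \<le> u" using powr_le_one_le[of u eB] u eB_ge_1 by simp
    then have denom_pos: "1 - u powr eB \<noteq> 0" using u by linarith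
    have "q u = ((\<Sum>j\<in>A. u - u powr e j) / (1 - u)) / ((1 - u powr eB) / (1 - u))"
      unfolding q_def sum_divide_distrib
      by (intro arg_cong2[where f="(/)"] sum.cong refl) (use u in \<open>simp add: field_simps\<close>)
    also have "\<dots> = (\<Sum>j\<in>A. u - u powr e j) / (1 - u powr eB)" using u denom_pos by simp
    finally show "q u = expected_N M X A i u /
          (1 - measure M {\<omega> \<in> space M. frechet_cdf (X i \<omega>) \<le> u \<and>
                                        (\<forall>j\<in>A. frechet_cdf (X j \<omega>) \<le> u)})"
      using joint expected_N_closed_form[OF ms A u, of i] by (simp add: e_def)
  qed
  with q_limit have "stability_index M X A i = (\<Sum>j\<in>A. e j - 1) / eB"
    unfolding stability_index_def by (intro tendsto_Lim) (auto dest: tendsto_cong)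
  then show ?thesis by (simp add: sum_subtractf e_def eB_def)
qed

lemma pair_coeff_bounds:
  assumes ms: "max_stable_frechet M X" and A: "finite A" "A \<noteq> {}"
  shows "\<forall>j. 1 \<le> extremal_coeff M X {i, j}"
    and "1 \<le> (MAX j\<in>A. extremal_coeff M X {i, j})"
    and "(MAX j\<in>A. extremal_coeff M X {i, j}) \<le> extremal_coeff M X (insert i A)"
    and "extremal_coeff M X (insert i A) \<le> real (card A) + 1"
proof -
  show pair_ge_1: "\<forall>j. 1 \<le> extremal_coeff M X {i, j}"
    using extremal_coeff_mono[OF ms, of "{i, _}" "{i}"] extremal_coeff_singleton[OF ms] by simp
  have "(MAX j\<in>A. extremal_coeff M X {i, j}) \<in> (\<lambda>j. extremal_coeff M X {i, j}) ` A"
    using A by (intro Max_in) auto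
  then obtain j0 where
    j0: "j0 \<in> A" "(MAX j\<in>A. extremal_coeff M X {i, j}) = extremal_coeff M X {i, j0}"
    by auto
  show "1 \<le> (MAX j\<in>A. extremal_coeff M X {i, j})" using j0 pair_ge_1 by simp
  show "(MAX j\<in>A. extremal_coeff M X {i, j}) \<le> extremal_coeff M X (insert i A)"
    using j0 extremal_coeff_mono[OF ms, of "insert i A" "{i, j0}"] A by auto
  have "real (card (insert i A)) \<le> real (card A) + 1"
    using A(1) by (simp add: card_insert_if)
  then show "extremal_coeff M X (insert i A) \<le> real (card A) + 1"
    using extremal_coeff_le_card[OF ms, of "insert i A"] A by simp
qed

theorem proposition3p2:
  fixes M :: "'a measure" and X :: "site \<Rightarrow> 'a \<Rightarrow> real" and A :: "site set" and i :: site
  assumes "max_stable_frechet M X"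
    and "finite A" and "A \<noteq> {}"
  shows "((\<Sum>j\<in>A. extremal_coeff M X {i, j}) - real (card A)) / (real (card A) + 1)
           \<le> stability_index M X A i \<and>
         stability_index M X A i
           \<le> ((\<Sum>j\<in>A. extremal_coeff M X {i, j}) - real (card A))
               / (MAX j\<in>A. extremal_coeff M X {i, j})"
proof -
  let ?S = "(\<Sum>j\<in>A. extremal_coeff M X {i, j}) - real (card A)"
  note bounds = pair_coeff_bounds[OF assms, of i]
  have "(\<Sum>j\<in>A. (1::real)) \<le> (\<Sum>j\<in>A. extremal_coeff M X {i, j})"
    using bounds(1) by (intro sum_mono) auto
  then have S_nonneg: "0 \<le> ?S" by simp
  have SI: "stability_index M X A i = ?S / extremal_coeff M X (insert i A)"
    using stability_index_closed_form[OF assms(1,2)] .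
  have "?S / (real (card A) + 1) \<le> ?S / extremal_coeff M X (insert i A)"
    using S_nonneg bounds(2-4) by (intro divide_left_mono) auto
  moreover have "?S / extremal_coeff M X (insert i A) \<le> ?S / (MAX j\<in>A. extremal_coeff M X {i, j})"
    using S_nonneg bounds(2-4) by (intro divide_left_mono) auto
  ultimately show ?thesis unfolding SI by simp
qed

end
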